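(* Let $L>0$, $D>0$, $\alpha\in(0,1]$, $\tau_{\rm acc}>0$, $\tau_{\rm m}>0$, $h_{\rm m}>0$, $\bar h_{\rm acc}>0$, $k>0$, and let $\tau_{\rm mix},\bar h_{\rm mix},\bar\rho,\bar v,c_1,\dots,c_5$ be as in the context. Consider the closed-loop system consisting of $$\tilde\rho_t+\bar v\tilde\rho_x+\bar\rho\tilde v_x=0,\qquad \tilde v_t-c_4\tilde v_x=-c_1\tilde\rho-c_2\tilde v-c_3\tilde h_{\rm acc}\quad (x\in[0,D],\,t\ge0),$$ $$\tilde\rho(0,t)+c_5\tilde v(0,t)=0,\qquad \tilde v_t(D,t)=-c_1\tilde\rho(D,t)-c_2\tilde v(D,t)-c_3\tilde h_{\rm acc}(D,t),$$ together with the control law $\tilde h_{\rm acc}(x,t)=\frac{1}{c_3}\left(-c_1\tilde\rho(x,t)+(k-c_2)\tilde v(x,t)\right)$. For all initial conditions $(\tilde\rho(\cdot,0),\tilde v(\cdot,0))\in C^1[0,D]\times C^1[0,D]$ which satisfy first-order compatibility with the boundary conditions, there exists a positive constant $\mu$ such that for all $t\ge0$ $$\|\tilde\rho(t)\|_{C^1}+\|\tilde v(t)\|_{C^1}\le\mu\left(\|\tilde\rho(0)\|_{C^1}+\|\tilde v(0)\|_{C^1}\right)e^{-\frac k2 t}.$$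
   Context: Definitions: $\tau_{\rm mix}=\left(\frac{\alpha}{\tau_{\rm acc}}+\frac{1-\alpha}{\tau_{\rm m}}\right)^{-1}$; $\bar h_{\rm mix}=\frac{\alpha+(1-\alpha)\frac{\tau_{\rm acc}}{\tau_{\rm m}}}{\alpha+(1-\alpha)\frac{\tau_{\rm acc}}{\tau_{\rm m}}\frac{\bar h_{\rm acc}}{h_{\rm m}}}\bar h_{\rm acc}$. Given a constant inflow $q_{\rm in}>0$ with $q_{\rm in}\bar h_{\rm mix}<1$, $\bar v=\frac{L}{\frac1{q_{\rm in}}-\bar h_{\rm mix}}$, $\bar\rho=q_{\rm in}/\bar v$ (so $\frac1{\bar\rho}-L=\bar h_{\rm mix}\bar v$, and $\bar\rho<1/L$). Constants: $c_1=\frac{1}{\bar\rho^2\tau_{\rm mix}\bar h_{\rm mix}}$, $c_2=\frac1{\tau_{\rm mix}}$, $c_3=\frac{\alpha}{\tau_{\rm acc}\bar h_{\rm acc}^2}\left(\frac1{\bar\rho}-L\right)$, $c_4=\frac{L}{\bar h_{\rm mix}}$, $c_5=\frac{\bar\rho}{\bar v}$. Norms: $\|u\|_{C^1}=\max_{[0,D]}|u|+\max_{[0,D]}|u'|$, and $\tilde\rho(t)=\tilde\rho(\cdot,t)$. First-order compatibility of the closed-loop system means: $\tilde\rho(0,0)+c_5\tilde v(0,0)=0$, the time-differentiated boundary condition at $x=0$ holds at $t=0$ when time derivatives are replaced via the closed-loop PDEs (i.e. $-\bar v\tilde\rho_x(0,0)-\bar\rho\tilde v_x(0,0)+c_5(c_4\tilde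 v_x(0,0)-k\tilde v(0,0))=0$), and the dynamic boundary condition at $x=D$ is consistent with the PDE at $t=0$ (i.e. $\tilde v_x(D,0)=0$). Here $\tilde\rho,\tilde v,\tilde h_{\rm acc}$ are deviations of traffic density, speed, and ACC time-gap from a uniform congested equilibrium $(\bar\rho,\bar v,\bar h_{\rm acc})$. *)

theory Defs
  imports "HOL-Analysis.Analysis"
begin

text \<open>Equilibrium quantities of the mixed ACC / manual traffic model.
  Parameters: L, alpha, tau_acc (ta), tau_m (tm), h_m (hm), bar h_acc (ha), q_in (q).\<close>

definition tau_mix :: "real \<Rightarrow> real \<Rightarrow> real \<Rightarrow> real" where
  "tau_mix \<alpha> ta tm = inverse (\<alpha> / ta + (1 - \<alpha>) / tm)"

definition h_mix :: "real \<Rightarrow> real \<Rightarrow> real \<Rightarrow> real \<Rightarrow> real \<Rightarrow> real" where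
  "h_mix \<alpha> ta tm hm ha =
     (\<alpha> + (1 - \<alpha>) * (ta / tm)) / (\<alpha> + (1 - \<alpha>) * (ta / tm) * (ha / hm)) * ha"

definition v_bar :: "real \<Rightarrow> real \<Rightarrow> real \<Rightarrow> real \<Rightarrow> real \<Rightarrow> real \<Rightarrow> real \<Rightarrow> real" where
  "v_bar L \<alpha> ta tm hm ha q = L / (1 / q - h_mix \<alpha> ta tm hm ha)"

definition rho_bar :: "real \<Rightarrow> real \<Rightarrow> real \<Rightarrow> real \<Rightarrow> real \<Rightarrow> real \<Rightarrow> real \<Rightarrow> real" where
  "rho_bar L \<alpha> ta tm hm ha q = q / v_bar L \<alpha> ta tm hm ha q"

definition cc1 :: "real \<Rightarrow> real \<Rightarrow> real \<Rightarrow> real \<Rightarrow> real \<Rightarrow> real \<Rightarrow> real \<Rightarrow> real" where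
  "cc1 L \<alpha> ta tm hm ha q =
     1 / ((rho_bar L \<alpha> ta tm hm ha q)\<^sup>2 * tau_mix \<alpha> ta tm * h_mix \<alpha> ta tm hm ha)"

definition cc2 :: "real \<Rightarrow> real \<Rightarrow> real \<Rightarrow> real" where
  "cc2 \<alpha> ta tm = 1 / tau_mix \<alpha> ta tm"

definition cc3 :: "real \<Rightarrow> real \<Rightarrow> real \<Rightarrow> real \<Rightarrow> real \<Rightarrow> real \<Rightarrow> real \<Rightarrow> real" where
  "cc3 L \<alpha> ta tm hm ha q =
     \<alpha> / (ta * ha\<^sup>2) * (1 / rho_bar L \<alpha> ta tm hm ha q - L)"

definition cc4 :: "real \<Rightarrow> real \<Rightarrow> real \<Rightarrow> real \<Rightarrow> real \<Rightarrow> real \<Rightarrow> real" where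
  "cc4 L \<alpha> ta tm hm ha = L / h_mix \<alpha> ta tm hm ha"

definition cc5 :: "real \<Rightarrow> real \<Rightarrow> real \<Rightarrow> real \<Rightarrow> real \<Rightarrow> real \<Rightarrow> real \<Rightarrow> real" where
  "cc5 L \<alpha> ta tm hm ha q = rho_bar L \<alpha> ta tm hm ha q / v_bar L \<alpha> ta tm hm ha q"

definition c1norm :: "real \<Rightarrow> (real \<Rightarrow> real) \<Rightarrow> (real \<Rightarrow> real) \<Rightarrow> real" where
  "c1norm D u u' = (SUP x\<in>{0..D}. \<bar>u x\<bar>) + (SUP x\<in>{0..D}. \<bar>u' x\<bar>)"

end

theory Submission
  imports Defs
begin

(* Under the control law the speed equation decouples into v_t = c4 v_x - k v with
   v_t(D,t) = -k v(D,t): v is carried leftwards from x = D along characteristics and damped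
   by exp(-k t), so v and v_x decay at rate k.  The combination z = \<rho> + \<gamma> v solves
   z_t + vb z_x = -\<gamma> k v, a transport equation to the right with boundary value
   (\<gamma> - c5) v(0,t) and a source that already decays at rate k.  Every backward characteristic
   of speed vb reaches x = 0 or t = 0 within time D/vb, so z, and likewise its time difference
   quotients, decay at rate k as well; the PDEs then give the bounds for \<rho>_t and \<rho>_x.
   The argument gives the rate k, stronger than k/2. *)

lemma has_real_derivative_compose_partials:
  fixes f fx ft :: "real \<Rightarrow> real \<Rightarrow> real" and X T :: "real \<Rightarrow> real"
  assumes fx: "\<And>x t. x \<in> A \<Longrightarrow> t \<in> B \<Longrightarrow> ((\<lambda>y. f y t) has_real_derivative fx x t) (at x within A)"
    and ft: "\<And>x t. x \<in> A \<Longrightarrow> t \<in> B \<Longrightarrow> ((\<lambda>s. f x s) has_real_derivative ft x t) (at t within B)"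
    and ft_cont: "continuous_on (A \<times> B) (\<lambda>(x, t). ft x t)" and "convex B"
    and X: "(X has_real_derivative X') (at \<sigma> within S)"
    and T: "(T has_real_derivative T') (at \<sigma> within S)"
    and path: "\<And>s. s \<in> S \<Longrightarrow> X s \<in> A \<and> T s \<in> B" and "\<sigma> \<in> S"
  shows "((\<lambda>s. f (X s) (T s)) has_real_derivative
           X' * fx (X \<sigma>) (T \<sigma>) + T' * ft (X \<sigma>) (T \<sigma>)) (at \<sigma> within S)"
proof -
  have Xt: "X \<sigma> \<in> A" "T \<sigma> \<in> B" using path[OF \<open>\<sigma> \<in> S\<close>] by auto
  define F' where "F' = (\<lambda>(dx, dt). dx * fx (X \<sigma>) (T \<sigma>) + blinfun_scaleR_left (ft (X \<sigma>) (T \<sigma>)) dt)"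
  have "((\<lambda>(x, t). f x t) has_derivative F') (at (X \<sigma>, T \<sigma>) within A \<times> B)"
    unfolding F'_def
  proof (rule has_derivative_partialsI)
    show "((\<lambda>y. f y (T \<sigma>)) has_derivative (\<lambda>dx. dx * fx (X \<sigma>) (T \<sigma>))) (at (X \<sigma>) within A)"
      using fx[OF Xt] by (simp add: has_field_derivative_def mult.commute[of _ "fx (X \<sigma>) (T \<sigma>)"])
    show "((\<lambda>s. f y s) has_derivative blinfun_apply (blinfun_scaleR_left (ft y s))) (at s within B)"
      if "y \<in> A" "s \<in> B" for y s
      using ft[OF that] by (simp add: has_field_derivative_def mult.commute[of _ "ft y s"])
    have "continuous_on (A \<times> B) (\<lambda>(x, t). blinfun_scaleR_left (ft x t))"
      using ft_cont by (auto simp: split_beta intro!: continuous_intros)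
    then show "continuous (at (X \<sigma>, T \<sigma>) within A \<times> B) (\<lambda>(x, t). blinfun_scaleR_left (ft x t))"
      using Xt continuous_on_eq_continuous_within by blast
  qed (use Xt \<open>convex B\<close> in auto)
  then have "((\<lambda>(x, t). f x t) has_derivative F') (at (X \<sigma>, T \<sigma>) within (\<lambda>s. (X s, T s)) ` S)"
    by (rule has_derivative_subset) (use path in auto)
  moreover have "((\<lambda>s. (X s, T s)) has_derivative (\<lambda>d. (X' * d, T' * d))) (at \<sigma> within S)"
    using X T by (auto simp: has_field_derivative_def intro: has_derivative_Pair)
  ultimately have "((\<lambda>(x, t). f x t) \<circ> (\<lambda>s. (X s, T s)) has_derivative F' \<circ> (\<lambda>d. (X' * d, T' * d)))
      (at \<sigma> within S)"
    by (intro diff_chain_within) auto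
  moreover have "F' \<circ> (\<lambda>d. (X' * d, T' * d)) = (*) (X' * fx (X \<sigma>) (T \<sigma>) + T' * ft (X \<sigma>) (T \<sigma>))"
    by (auto simp: F'_def fun_eq_iff algebra_simps)
  ultimately show ?thesis by (simp add: has_field_derivative_def o_def)
qed

lemma has_real_derivative_abs_le:
  fixes f :: "real \<Rightarrow> real"
  assumes f': "(f has_real_derivative f') (at x within S)" and "at x within S \<noteq> bot"
    and Lipschitz: "\<And>y. y \<in> S \<Longrightarrow> \<bar>f y - f x\<bar> \<le> M * \<bar>y - x\<bar>"
  shows "\<bar>f'\<bar> \<le> M"
proof -
  have "((\<lambda>y. \<bar>(f y - f x) / (y - x)\<bar>) \<longlongrightarrow> \<bar>f'\<bar>) (at x within S)"
    using f' unfolding has_field_derivative_iff by (rule tendsto_rabs)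
  moreover have "eventually (\<lambda>y. \<bar>(f y - f x) / (y - x)\<bar> \<le> M) (at x within S)"
    unfolding eventually_at_filter
    by (intro always_eventually allI impI) (use Lipschitz in \<open>auto simp: abs_divide divide_le_eq\<close>)
  ultimately show ?thesis using \<open>at x within S \<noteq> bot\<close> by (rule tendsto_upperbound)
qed

lemma abs_diff_le_derivative_bound:
  fixes f f' :: "real \<Rightarrow> real"
  assumes "convex S" "\<And>z. z \<in> S \<Longrightarrow> (f has_real_derivative f' z) (at z within S)"
    and "\<And>z. z \<in> S \<Longrightarrow> \<bar>f' z\<bar> \<le> M" and "x \<in> S" "y \<in> S"
  shows "\<bar>f x - f y\<bar> \<le> M * \<bar>x - y\<bar>"
  using field_differentiable_bound[of S f f' M x y] assms by auto

lemma characteristic_foot: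
  fixes c D x t :: real
  assumes "c > 0" "x \<in> {0..D}" "t \<ge> 0"
  defines "s0 \<equiv> max 0 (t - x / c)"
  shows "s0 \<in> {0..t}" and "t - s0 \<le> D / c"
    and "\<And>s. s \<in> {s0..t} \<Longrightarrow> x - c * t + c * s \<in> {0..D}"
    and "s0 = 0 \<or> x - c * t + c * s0 = 0"
proof -
  have "x / c \<le> D / c" "0 \<le> x / c" using assms by (auto intro: divide_right_mono)
  then show "s0 \<in> {0..t}" "t - s0 \<le> D / c" using assms by (auto simp: s0_def)
  show "x - c * t + c * s \<in> {0..D}" if "s \<in> {s0..t}" for s
  proof -
    have "c * (t - s) \<le> x" using that \<open>c > 0\<close> by (auto simp: s0_def field_simps)
    moreover have "0 \<le> c * (t - s)" using that \<open>c > 0\<close> by auto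
    ultimately show ?thesis using assms(2) by (auto simp: algebra_simps)
  qed
  show "s0 = 0 \<or> x - c * t + c * s0 = 0"
    using \<open>c > 0\<close> by (auto simp: s0_def max_def field_simps)
qed

lemma characteristic_increment_le:
  fixes f g :: "real \<Rightarrow> real \<Rightarrow> real"
  assumes "c > 0" "k \<ge> 0" and x: "x \<in> {0..D}" and t: "t \<ge> 0" and s: "s \<in> {max 0 (t - x / c)..t}"
    and char: "\<And>\<sigma>. \<sigma> \<in> {max 0 (t - x / c)..t} \<Longrightarrow>
      ((\<lambda>s. f (x - c * t + c * s) s) has_real_derivative g (x - c * t + c * \<sigma>) \<sigma>)
        (at \<sigma> within {max 0 (t - x / c)..t})"
    and source: "\<And>y \<sigma>. y \<in> {0..D} \<Longrightarrow> \<sigma> \<ge> 0 \<Longrightarrow> \<bar>g y \<sigma>\<bar> \<le> G * exp (- k * \<sigma>)"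
  shows "\<bar>f x t - f (x - c * t + c * s) s\<bar> \<le> G * exp (- k * s) * (t - s)"
proof -
  have "G \<ge> 0" using source[OF x order_refl] by (auto intro: order_trans)
  have "\<bar>g (x - c * t + c * \<sigma>) \<sigma>\<bar> \<le> G * exp (- k * s)" if "\<sigma> \<in> {s..t}" for \<sigma>
  proof -
    have "\<bar>g (x - c * t + c * \<sigma>) \<sigma>\<bar> \<le> G * exp (- k * \<sigma>)"
      using source characteristic_foot(3)[OF \<open>c > 0\<close> x t] s that by auto
    also have "\<dots> \<le> G * exp (- k * s)"
      using that \<open>k \<ge> 0\<close> \<open>G \<ge> 0\<close> by (intro mult_left_mono) (auto intro: mult_left_mono)
    finally show ?thesis .
  qed
  moreover have "((\<lambda>s. f (x - c * t + c * s) s) has_real_derivative g (x - c * t + c * \<sigma>) \<sigma>)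
      (at \<sigma> within {s..t})" if "\<sigma> \<in> {s..t}" for \<sigma>
    using s that by (intro DERIV_subset[OF char]) auto
  ultimately have "\<bar>f (x - c * t + c * t) t - f (x - c * t + c * s) s\<bar> \<le> G * exp (- k * s) * \<bar>t - s\<bar>"
    by (intro abs_diff_le_derivative_bound[of "{s..t}"]) (use s in auto)
  then show ?thesis using s by simp
qed

lemma transport_exp_bound:
  fixes f g :: "real \<Rightarrow> real \<Rightarrow> real"
  assumes "c > 0" "k > 0"
    and char: "\<And>x t \<sigma>. x \<in> {0..D} \<Longrightarrow> t \<ge> 0 \<Longrightarrow> \<sigma> \<in> {max 0 (t - x / c)..t} \<Longrightarrow>
      ((\<lambda>s. f (x - c * t + c * s) s) has_real_derivative g (x - c * t + c * \<sigma>) \<sigma>)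
        (at \<sigma> within {max 0 (t - x / c)..t})"
    and source: "\<And>y \<sigma>. y \<in> {0..D} \<Longrightarrow> \<sigma> \<ge> 0 \<Longrightarrow> \<bar>g y \<sigma>\<bar> \<le> G * exp (- k * \<sigma>)"
    and boundary: "\<And>\<sigma>. \<sigma> \<ge> 0 \<Longrightarrow> \<bar>f 0 \<sigma>\<bar> \<le> B * exp (- k * \<sigma>)"
    and initial: "\<And>y. y \<in> {0..D} \<Longrightarrow> \<bar>f y 0\<bar> \<le> I"
    and x: "x \<in> {0..D}" and t: "t \<ge> 0"
  shows "\<bar>f x t\<bar> \<le> (I + B + G * D / c) * exp (k * D / c) * exp (- k * t)"
proof -
  define s0 where "s0 = max 0 (t - x / c)"
  define p where "p = x - c * t + c * s0"
  note foot = characteristic_foot[OF \<open>c > 0\<close> x t, folded s0_def]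
  have "G \<ge> 0" "B \<ge> 0" "I \<ge> 0"
    using source[OF x order_refl] boundary[of 0] initial[OF x] by (auto intro: order_trans)
  have "\<bar>f x t - f p s0\<bar> \<le> G * exp (- k * s0) * (t - s0)"
    unfolding p_def s0_def
    by (rule characteristic_increment_le[where f = f and g = g, OF \<open>c > 0\<close> _ x t _ char[OF x t] source])
      (use \<open>k > 0\<close> foot(1) s0_def in auto)
  moreover have "\<bar>f p s0\<bar> \<le> (I + B) * exp (- k * s0)"
    using foot(4) unfolding p_def[symmetric]
  proof
    assume "s0 = 0"
    then show ?thesis using initial[of p] foot(3)[of s0] foot(1) \<open>B \<ge> 0\<close> by (simp add: p_def)
  next
    assume "p = 0"
    moreover have "0 \<le> I * exp (- k * s0)" using \<open>I \<ge> 0\<close> by simp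
    ultimately show ?thesis using boundary[of s0] foot(1) by (simp add: distrib_right)
  qed
  moreover have "G * (t - s0) \<le> G * (D / c)"
    using foot(2) \<open>G \<ge> 0\<close> by (intro mult_left_mono) auto
  ultimately have "\<bar>f x t\<bar> \<le> (I + B) * exp (- k * s0) + G * (D / c) * exp (- k * s0)"
    by (smt (verit) exp_gt_zero mult_right_mono mult.commute mult.left_commute)
  then have "\<bar>f x t\<bar> \<le> (I + B + G * D / c) * exp (- k * s0)"
    by (simp add: algebra_simps)
  also have "\<dots> \<le> (I + B + G * D / c) * (exp (k * D / c) * exp (- k * t))"
  proof (intro mult_left_mono)
    have "k * (t - s0) \<le> k * (D / c)" using foot(2) \<open>k > 0\<close> by (intro mult_left_mono) auto
    then show "exp (- k * s0) \<le> exp (k * D / c) * exp (- k * t)"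
      by (simp add: mult_exp_exp algebra_simps)
  qed (use \<open>G \<ge> 0\<close> \<open>B \<ge> 0\<close> \<open>I \<ge> 0\<close> \<open>c > 0\<close> x in auto)
  finally show ?thesis by (simp add: mult.assoc)
qed

lemma abs_le_c1norm:
  assumes "continuous_on {0..D} u" "continuous_on {0..D} u'" "y \<in> {0..D}"
  shows "\<bar>u y\<bar> \<le> c1norm D u u'" and "\<bar>u' y\<bar> \<le> c1norm D u u'"
proof -
  have bdd: "bdd_above ((\<lambda>x. \<bar>w x\<bar>) ` {0..D})" if "continuous_on {0..D} w" for w :: "real \<Rightarrow> real"
    using that by (intro bounded_imp_bdd_above compact_imp_bounded compact_continuous_image continuous_intros) auto
  have "\<bar>u y\<bar> \<le> (SUP x\<in>{0..D}. \<bar>u x\<bar>)" "\<bar>u' y\<bar> \<le> (SUP x\<in>{0..D}. \<bar>u' x\<bar>)"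
    using assms bdd by (auto intro: cSUP_upper)
  moreover have "0 \<le> \<bar>u y\<bar>" "0 \<le> \<bar>u' y\<bar>" by auto
  ultimately show "\<bar>u y\<bar> \<le> c1norm D u u'" "\<bar>u' y\<bar> \<le> c1norm D u u'"
    unfolding c1norm_def by linarith+
qed

lemma c1norm_le:
  assumes "D \<ge> 0" "\<And>y. y \<in> {0..D} \<Longrightarrow> \<bar>u y\<bar> \<le> A" "\<And>y. y \<in> {0..D} \<Longrightarrow> \<bar>u' y\<bar> \<le> B"
  shows "c1norm D u u' \<le> A + B"
  unfolding c1norm_def using assms by (intro add_mono cSUP_least) auto

(* The closed-loop system with the control law substituted: c1, c2 and c3 cancel from the
   speed equation and from its boundary condition at x = D. *)
locale closed_loop =
  fixes D vb rb c4 c5 k :: real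
    and \<rho> v \<rho>x \<rho>t vx vt :: "real \<Rightarrow> real \<Rightarrow> real"
  assumes D_pos: "D > 0" and vb_pos: "vb > 0" and rb_nonneg: "rb \<ge> 0"
    and c4_pos: "c4 > 0" and k_pos: "k > 0"
    and drx: "\<And>x t. x \<in> {0..D} \<Longrightarrow> t \<ge> 0 \<Longrightarrow>
               ((\<lambda>y. \<rho> y t) has_real_derivative \<rho>x x t) (at x within {0..D})"
    and drt: "\<And>x t. x \<in> {0..D} \<Longrightarrow> t \<ge> 0 \<Longrightarrow>
               ((\<lambda>s. \<rho> x s) has_real_derivative \<rho>t x t) (at t within {0..})"
    and dvx: "\<And>x t. x \<in> {0..D} \<Longrightarrow> t \<ge> 0 \<Longrightarrow>
               ((\<lambda>y. v y t) has_real_derivative vx x t) (at x within {0..D})"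
    and dvt: "\<And>x t. x \<in> {0..D} \<Longrightarrow> t \<ge> 0 \<Longrightarrow>
               ((\<lambda>s. v x s) has_real_derivative vt x t) (at t within {0..})"
    and cont_\<rho>x: "continuous_on ({0..D} \<times> {0..}) (\<lambda>(x, t). \<rho>x x t)"
    and cont_\<rho>t: "continuous_on ({0..D} \<times> {0..}) (\<lambda>(x, t). \<rho>t x t)"
    and cont_vx: "continuous_on ({0..D} \<times> {0..}) (\<lambda>(x, t). vx x t)"
    and cont_vt: "continuous_on ({0..D} \<times> {0..}) (\<lambda>(x, t). vt x t)"
    and \<rho>_eq: "\<And>x t. x \<in> {0..D} \<Longrightarrow> t \<ge> 0 \<Longrightarrow> \<rho>t x t + vb * \<rho>x x t + rb * vx x t = 0"
    and v_eq: "\<And>x t. x \<in> {0..D} \<Longrightarrow> t \<ge> 0 \<Longrightarrow> vt x t = c4 * vx x t - k * v x t"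
    and v_bc: "\<And>t. t \<ge> 0 \<Longrightarrow> vt D t = - k * v D t"
    and \<rho>_bc: "\<And>t. t \<ge> 0 \<Longrightarrow> \<rho> 0 t + c5 * v 0 t = 0"
begin

definition init_norm :: real where
  "init_norm = c1norm D (\<lambda>x. \<rho> x 0) (\<lambda>x. \<rho>x x 0) + c1norm D (\<lambda>x. v x 0) (\<lambda>x. vx x 0)"

lemma init_bounds:
  assumes "y \<in> {0..D}"
  shows "\<bar>\<rho> y 0\<bar> \<le> init_norm" "\<bar>\<rho>x y 0\<bar> \<le> init_norm"
    and "\<bar>v y 0\<bar> \<le> init_norm" "\<bar>vx y 0\<bar> \<le> init_norm"
proof -
  have slice: "continuous_on {0..D} (\<lambda>y. w y 0)"
    if "continuous_on ({0..D} \<times> {0..}) (\<lambda>(x, t). w x t)" for w :: "real \<Rightarrow> real \<Rightarrow> real"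
  proof -
    have "continuous_on {0..D} ((\<lambda>(x, t). w x t) \<circ> (\<lambda>y. (y, 0)))"
      by (intro continuous_on_compose continuous_intros continuous_on_subset[OF that]) auto
    then show ?thesis by (simp add: o_def)
  qed
  have "continuous_on {0..D} (\<lambda>y. \<rho> y 0)" "continuous_on {0..D} (\<lambda>y. v y 0)"
    unfolding continuous_on_eq_continuous_within using drx dvx DERIV_continuous by fastforce+
  note bounds = abs_le_c1norm[OF this(1) slice[OF cont_\<rho>x]] abs_le_c1norm[OF this(2) slice[OF cont_vx]]
  have "\<bar>\<rho> 0 0\<bar> \<le> c1norm D (\<lambda>x. \<rho> x 0) (\<lambda>x. \<rho>x x 0)" "\<bar>v 0 0\<bar> \<le> c1norm D (\<lambda>x. v x 0) (\<lambda>x. vx x 0)"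
    using bounds D_pos by auto
  then show "\<bar>\<rho> y 0\<bar> \<le> init_norm" "\<bar>\<rho>x y 0\<bar> \<le> init_norm"
    "\<bar>v y 0\<bar> \<le> init_norm" "\<bar>vx y 0\<bar> \<le> init_norm"
    using bounds[OF assms] unfolding init_norm_def by linarith+
qed

lemma init_norm_nonneg: "init_norm \<ge> 0"
  using init_bounds(1)[of 0] D_pos by auto

lemma \<rho>_along_path:
  assumes "(X has_real_derivative X') (at \<sigma> within S)" "(T has_real_derivative T') (at \<sigma> within S)"
    and "\<And>s. s \<in> S \<Longrightarrow> X s \<in> {0..D} \<and> T s \<ge> 0" "\<sigma> \<in> S"
  shows "((\<lambda>s. \<rho> (X s) (T s)) has_real_derivative
           X' * \<rho>x (X \<sigma>) (T \<sigma>) + T' * \<rho>t (X \<sigma>) (T \<sigma>)) (at \<sigma> within S)"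
  by (rule has_real_derivative_compose_partials[OF drx drt cont_\<rho>t _ assms(1,2) _ assms(4)])
    (use assms(3) in auto)

lemma v_along_path:
  assumes "(X has_real_derivative X') (at \<sigma> within S)" "(T has_real_derivative T') (at \<sigma> within S)"
    and "\<And>s. s \<in> S \<Longrightarrow> X s \<in> {0..D} \<and> T s \<ge> 0" "\<sigma> \<in> S"
  shows "((\<lambda>s. v (X s) (T s)) has_real_derivative
           X' * vx (X \<sigma>) (T \<sigma>) + T' * vt (X \<sigma>) (T \<sigma>)) (at \<sigma> within S)"
  by (rule has_real_derivative_compose_partials[OF dvx dvt cont_vt _ assms(1,2) _ assms(4)])
    (use assms(3) in auto)

lemma exp_v_along_characteristic:
  assumes path: "\<And>s. s \<in> S \<Longrightarrow> x0 - c4 * s \<in> {0..D} \<and> s \<ge> 0" and "\<sigma> \<in> S"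
  shows "((\<lambda>s. exp (k * s) * v (x0 - c4 * s) s) has_real_derivative 0) (at \<sigma> within S)"
proof -
  have "((\<lambda>s. v (x0 - c4 * s) s) has_real_derivative
          (- c4) * vx (x0 - c4 * \<sigma>) \<sigma> + 1 * vt (x0 - c4 * \<sigma>) \<sigma>) (at \<sigma> within S)"
    by (rule v_along_path) (use path \<open>\<sigma> \<in> S\<close> in \<open>auto intro!: derivative_eq_intros\<close>)
  moreover have "(- c4) * vx (x0 - c4 * \<sigma>) \<sigma> + 1 * vt (x0 - c4 * \<sigma>) \<sigma> = - k * v (x0 - c4 * \<sigma>) \<sigma>"
    using v_eq path[OF \<open>\<sigma> \<in> S\<close>] by simp
  moreover have "((\<lambda>s. exp (k * s)) has_real_derivative exp (k * \<sigma>) * k) (at \<sigma> within S)"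
    by (auto intro!: derivative_eq_intros)
  ultimately show ?thesis
    using DERIV_mult[of "\<lambda>s. exp (k * s)"] by fastforce
qed

lemma exp_v_constant_along_characteristic:
  assumes "0 \<le> s0" "s0 \<le> t" and path: "\<And>s. s \<in> {s0..t} \<Longrightarrow> x0 - c4 * s \<in> {0..D}"
  shows "exp (k * t) * v (x0 - c4 * t) t = exp (k * s0) * v (x0 - c4 * s0) s0"
proof -
  obtain C where "\<forall>s\<in>{s0..t}. exp (k * s) * v (x0 - c4 * s) s = C"
    using has_field_derivative_zero_constant[OF convex_real_interval(5) exp_v_along_characteristic]
      path \<open>0 \<le> s0\<close> by force
  then show ?thesis using \<open>s0 \<le> t\<close> by auto
qed

lemma exp_v_constant_at_boundary:
  assumes "t \<ge> 0"
  shows "exp (k * t) * v D t = v D 0"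
proof -
  have "((\<lambda>s. exp (k * s) * v D s) has_real_derivative 0) (at \<sigma> within {0..t})"
    if "\<sigma> \<in> {0..t}" for \<sigma>
  proof -
    have "((\<lambda>s. v D s) has_real_derivative vt D \<sigma>) (at \<sigma> within {0..t})"
      by (rule DERIV_subset[OF dvt]) (use that D_pos in auto)
    moreover have "((\<lambda>s. exp (k * s)) has_real_derivative exp (k * \<sigma>) * k) (at \<sigma> within {0..t})"
      by (auto intro!: derivative_eq_intros)
    ultimately show ?thesis
      using DERIV_mult[of "\<lambda>s. exp (k * s)"] v_bc[of \<sigma>] that by fastforce
  qed
  then obtain C where "\<forall>s\<in>{0..t}. exp (k * s) * v D s = C"
    using has_field_derivative_zero_constant[OF convex_real_interval(5)] by blast
  then show ?thesis using assms by force
qed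

lemma v_explicit:
  assumes y: "y \<in> {0..D}" and "t \<ge> 0"
  shows "v y t = exp (- k * t) * v (min (y + c4 * t) D) 0"
proof -
  have path: "y + c4 * t - c4 * s \<in> {0..D}" if "s \<in> {s0..t}" "y + c4 * (t - s0) \<le> D" for s s0
  proof -
    have "c4 * (t - s) \<le> c4 * (t - s0)" "0 \<le> c4 * (t - s)" using that c4_pos by auto
    then show ?thesis using that y by (auto simp: algebra_simps)
  qed
  show ?thesis
  proof (cases "y + c4 * t \<le> D")
    case True
    then have "exp (k * t) * v y t = v (y + c4 * t) 0"
      using exp_v_constant_along_characteristic[of 0 t "y + c4 * t"] path[of _ 0] \<open>t \<ge> 0\<close> by auto
    then show ?thesis using True by (simp add: exp_minus field_simps)
  next
    case False
    define s0 where "s0 = t - (D - y) / c4"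
    have foot: "y + c4 * t - c4 * s0 = D" using c4_pos by (simp add: s0_def field_simps)
    have "0 \<le> s0" "s0 \<le> t" using False y c4_pos by (auto simp: s0_def field_simps)
    then have "exp (k * t) * v y t = exp (k * s0) * v D s0"
      using exp_v_constant_along_characteristic[of s0 t "y + c4 * t"] path[of _ s0] foot
      by (auto simp: algebra_simps)
    also have "\<dots> = v D 0" by (rule exp_v_constant_at_boundary) fact
    finally show ?thesis using False by (simp add: exp_minus field_simps)
  qed
qed

lemma v_bound:
  assumes "y \<in> {0..D}" "t \<ge> 0"
  shows "\<bar>v y t\<bar> \<le> init_norm * exp (- k * t)"
proof -
  have "min (y + c4 * t) D \<in> {0..D}" using assms c4_pos D_pos by auto
  then show ?thesis
    using v_explicit[OF assms] init_bounds(3) by (simp add: abs_mult mult.commute mult_left_mono)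
qed

lemma vx_bound:
  assumes "y \<in> {0..D}" "t \<ge> 0"
  shows "\<bar>vx y t\<bar> \<le> init_norm * exp (- k * t)"
proof (rule has_real_derivative_abs_le[OF dvx[OF assms]])
  show "at y within {0..D} \<noteq> bot" using assms D_pos by (simp add: trivial_limit_within)
  have v0_Lipschitz: "\<bar>v p 0 - v q 0\<bar> \<le> init_norm * \<bar>p - q\<bar>" if "p \<in> {0..D}" "q \<in> {0..D}" for p q
    by (rule abs_diff_le_derivative_bound[OF _ dvx _ that]) (auto intro: init_bounds(4))
  fix y' assume "y' \<in> {0..D}"
  let ?m = "\<lambda>y. min (y + c4 * t) D"
  have "\<bar>v y' t - v y t\<bar> = exp (- k * t) * \<bar>v (?m y') 0 - v (?m y) 0\<bar>"
    using v_explicit[OF \<open>y' \<in> {0..D}\<close> \<open>t \<ge> 0\<close>] v_explicit[OF assms]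
    by (simp add: abs_mult right_diff_distrib[symmetric])
  also have "\<dots> \<le> exp (- k * t) * (init_norm * \<bar>?m y' - ?m y\<bar>)"
    using v0_Lipschitz \<open>y' \<in> {0..D}\<close> assms c4_pos D_pos by (intro mult_left_mono) auto
  also have "\<dots> \<le> exp (- k * t) * (init_norm * \<bar>y' - y\<bar>)"
    using init_norm_nonneg by (intro mult_left_mono) (auto simp: min_def abs_if)
  finally show "\<bar>v y' t - v y t\<bar> \<le> init_norm * exp (- k * t) * \<bar>y' - y\<bar>"
    by (simp add: algebra_simps)
qed

lemma vt_bound:
  assumes "y \<in> {0..D}" "t \<ge> 0"
  shows "\<bar>vt y t\<bar> \<le> (c4 + k) * init_norm * exp (- k * t)"
proof -
  have "\<bar>vt y t\<bar> \<le> c4 * \<bar>vx y t\<bar> + k * \<bar>v y t\<bar>"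
    using v_eq[OF assms] abs_triangle_ineq4[of "c4 * vx y t" "k * v y t"] c4_pos k_pos
    by (simp add: abs_mult)
  also have "\<dots> \<le> c4 * (init_norm * exp (- k * t)) + k * (init_norm * exp (- k * t))"
    using vx_bound[OF assms] v_bound[OF assms] c4_pos k_pos by (intro add_mono mult_left_mono) auto
  finally show ?thesis by (simp add: algebra_simps)
qed

lemma v_time_increment:
  assumes "y \<in> {0..D}" "t \<ge> 0" "h \<ge> 0"
  shows "\<bar>v y (t + h) - v y t\<bar> \<le> (c4 + k) * init_norm * exp (- k * t) * h"
proof -
  have "\<bar>vt y s\<bar> \<le> (c4 + k) * init_norm * exp (- k * t)" if "s \<in> {t..t + h}" for s
  proof -
    have "\<bar>vt y s\<bar> \<le> (c4 + k) * init_norm * exp (- k * s)" using vt_bound assms that by auto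
    also have "\<dots> \<le> (c4 + k) * init_norm * exp (- k * t)"
      using that assms c4_pos k_pos init_norm_nonneg by (intro mult_left_mono) auto
    finally show ?thesis .
  qed
  moreover have "((\<lambda>s. v y s) has_real_derivative vt y s) (at s within {t..t + h})"
    if "s \<in> {t..t + h}" for s
    by (rule DERIV_subset[OF dvt]) (use assms that in auto)
  ultimately have "\<bar>v y (t + h) - v y t\<bar> \<le> (c4 + k) * init_norm * exp (- k * t) * \<bar>t + h - t\<bar>"
    by (intro abs_diff_le_derivative_bound[of "{t..t + h}"]) (use assms in auto)
  then show ?thesis using assms by simp
qed

(* z is the Riemann invariant travelling with speed vb: \<gamma> is chosen so that the term
   rb * vx of the density equation cancels. *)
definition \<gamma> :: real where
  "\<gamma> = rb / (c4 + vb)"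

definition z :: "real \<Rightarrow> real \<Rightarrow> real" where
  "z x t = \<rho> x t + \<gamma> * v x t"

lemma \<gamma>_nonneg: "\<gamma> \<ge> 0"
  using rb_nonneg c4_pos vb_pos by (simp add: \<gamma>_def)

lemma z_along_characteristic:
  assumes "x \<in> {0..D}" "t \<ge> 0" "h \<ge> 0" and \<sigma>: "\<sigma> \<in> {max 0 (t - x / vb)..t}"
  shows "((\<lambda>s. z (x - vb * t + vb * s) (h + s)) has_real_derivative
           - \<gamma> * k * v (x - vb * t + vb * \<sigma>) (h + \<sigma>)) (at \<sigma> within {max 0 (t - x / vb)..t})"
proof -
  let ?S = "{max 0 (t - x / vb)..t}" and ?x = "x - vb * t + vb * \<sigma>" and ?t = "h + \<sigma>"
  have path: "x - vb * t + vb * s \<in> {0..D} \<and> h + s \<ge> 0" if "s \<in> ?S" for s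
    using characteristic_foot(3)[OF vb_pos assms(1,2) that] that \<open>h \<ge> 0\<close> by auto
  have dX: "((\<lambda>s. x - vb * t + vb * s) has_real_derivative vb) (at \<sigma> within ?S)"
    and dT: "((\<lambda>s. h + s) has_real_derivative 1) (at \<sigma> within ?S)"
    by (auto intro!: derivative_eq_intros)
  have d\<rho>: "((\<lambda>s. \<rho> (x - vb * t + vb * s) (h + s)) has_real_derivative
          vb * \<rho>x ?x ?t + 1 * \<rho>t ?x ?t) (at \<sigma> within ?S)"
    by (rule \<rho>_along_path[OF dX dT path \<sigma>])
  have dv: "((\<lambda>s. v (x - vb * t + vb * s) (h + s)) has_real_derivative
          vb * vx ?x ?t + 1 * vt ?x ?t) (at \<sigma> within ?S)"
    by (rule v_along_path[OF dX dT path \<sigma>])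
  have "vb * \<rho>x ?x ?t + 1 * \<rho>t ?x ?t + \<gamma> * (vb * vx ?x ?t + 1 * vt ?x ?t) = - \<gamma> * k * v ?x ?t"
  proof -
    have "rb = \<gamma> * (c4 + vb)" using c4_pos vb_pos by (simp add: \<gamma>_def)
    then have e1: "\<rho>t ?x ?t = - vb * \<rho>x ?x ?t - \<gamma> * (c4 + vb) * vx ?x ?t"
      using \<rho>_eq[of ?x ?t] path[OF \<sigma>] by (simp add: algebra_simps)
    have e2: "vt ?x ?t = c4 * vx ?x ?t - k * v ?x ?t" using v_eq path[OF \<sigma>] by simp
    show ?thesis unfolding e1 e2 by (simp add: algebra_simps)
  qed
  then show ?thesis
    using DERIV_add[OF d\<rho> DERIV_cmult[OF dv, of \<gamma>]] by (simp add: z_def)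
qed

lemma z_boundary: "t \<ge> 0 \<Longrightarrow> z 0 t = (\<gamma> - c5) * v 0 t"
  using \<rho>_bc[of t] by (simp add: z_def algebra_simps)

lemma z_source_bound:
  assumes "y \<in> {0..D}" "t \<ge> 0"
  shows "\<bar>- \<gamma> * k * v y t\<bar> \<le> \<gamma> * k * init_norm * exp (- k * t)"
  using v_bound[OF assms] \<gamma>_nonneg k_pos
  by (simp add: abs_mult mult.assoc mult_left_mono)

lemma z_bound: "\<exists>C. \<forall>x\<in>{0..D}. \<forall>t\<ge>0. \<bar>z x t\<bar> \<le> C * init_norm * exp (- k * t)"
proof (intro exI ballI allI impI)
  fix x t :: real assume "x \<in> {0..D}" "t \<ge> 0"
  have "\<bar>z y 0\<bar> \<le> (1 + \<gamma>) * init_norm" if "y \<in> {0..D}" for y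
    using init_bounds(1,3)[OF that] \<gamma>_nonneg abs_triangle_ineq[of "\<rho> y 0" "\<gamma> * v y 0"]
      mult_left_mono[of "\<bar>v y 0\<bar>" init_norm \<gamma>]
    by (simp add: z_def abs_mult algebra_simps)
  moreover have "\<bar>z 0 \<sigma>\<bar> \<le> (\<bar>\<gamma> - c5\<bar> * init_norm) * exp (- k * \<sigma>)" if "\<sigma> \<ge> 0" for \<sigma>
    using z_boundary[OF that] v_bound[of 0 \<sigma>] that D_pos
    by (simp add: abs_mult mult.assoc mult_left_mono)
  ultimately have "\<bar>z x t\<bar> \<le> ((1 + \<gamma>) * init_norm + \<bar>\<gamma> - c5\<bar> * init_norm + \<gamma> * k * init_norm * D / vb)
      * exp (k * D / vb) * exp (- k * t)"
    using z_along_characteristic[where h = 0] z_source_bound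
    by (intro transport_exp_bound[where g = "\<lambda>y \<sigma>. - \<gamma> * k * v y \<sigma>",
          OF vb_pos k_pos _ _ _ _ \<open>x \<in> {0..D}\<close> \<open>t \<ge> 0\<close>]) auto
  then show "\<bar>z x t\<bar> \<le> ((1 + \<gamma> + \<bar>\<gamma> - c5\<bar> + \<gamma> * k * D / vb) * exp (k * D / vb)) * init_norm * exp (- k * t)"
    by (simp add: algebra_simps)
qed

lemma z_initial_Lipschitz:
  assumes "p \<in> {0..D}" "q \<in> {0..D}"
  shows "\<bar>z p 0 - z q 0\<bar> \<le> (1 + \<gamma>) * init_norm * \<bar>p - q\<bar>"
proof (rule abs_diff_le_derivative_bound[OF _ _ _ assms])
  show "((\<lambda>y. z y 0) has_real_derivative \<rho>x y 0 + \<gamma> * vx y 0) (at y within {0..D})"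
    if "y \<in> {0..D}" for y
    unfolding z_def using that by (intro DERIV_add DERIV_cmult drx dvx) auto
  show "\<bar>\<rho>x y 0 + \<gamma> * vx y 0\<bar> \<le> (1 + \<gamma>) * init_norm" if "y \<in> {0..D}" for y
    using init_bounds(2,4)[OF that] \<gamma>_nonneg abs_triangle_ineq[of "\<rho>x y 0" "\<gamma> * vx y 0"]
      mult_left_mono[of "\<bar>vx y 0\<bar>" init_norm \<gamma>]
    by (simp add: abs_mult algebra_simps)
qed simp

lemma z_boundary_increment:
  assumes "s \<ge> 0"
  shows "\<bar>z 0 s - z 0 0\<bar> \<le> \<bar>\<gamma> - c5\<bar> * (c4 + k) * init_norm * s"
proof -
  have "\<bar>z 0 s - z 0 0\<bar> = \<bar>\<gamma> - c5\<bar> * \<bar>v 0 (0 + s) - v 0 0\<bar>"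
    using z_boundary[OF assms] z_boundary[of 0] by (simp add: abs_mult right_diff_distrib[symmetric])
  also have "\<dots> \<le> \<bar>\<gamma> - c5\<bar> * ((c4 + k) * init_norm * s)"
    using v_time_increment[of 0 0 s] assms D_pos by (intro mult_left_mono) auto
  finally show ?thesis by (simp add: mult.assoc)
qed

lemma z_initial_increment: "\<exists>C. \<forall>y\<in>{0..D}. \<forall>h\<ge>0. \<bar>z y h - z y 0\<bar> \<le> C * init_norm * h"
proof (intro exI ballI allI impI)
  fix y h :: real assume y: "y \<in> {0..D}" and "h \<ge> 0"
  define s0 where "s0 = max 0 (h - y / vb)"
  define p where "p = y - vb * h + vb * s0"
  note foot = characteristic_foot[OF vb_pos y \<open>h \<ge> 0\<close>, folded s0_def]
  have "\<bar>z y h - z p s0\<bar> \<le> \<gamma> * k * init_norm * exp (- k * s0) * (h - s0)"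
    unfolding p_def s0_def
    by (rule characteristic_increment_le[where f = z and g = "\<lambda>y \<sigma>. - \<gamma> * k * v y \<sigma>",
          OF vb_pos _ y \<open>h \<ge> 0\<close> _
          z_along_characteristic[where h = 0, unfolded add_0_left, OF y \<open>h \<ge> 0\<close> order_refl]
          z_source_bound])
      (use k_pos foot(1) s0_def in auto)
  also have "\<dots> \<le> \<gamma> * k * init_norm * 1 * h"
    using foot(1) \<gamma>_nonneg k_pos init_norm_nonneg by (intro mult_mono) auto
  finally have "\<bar>z y h - z p s0\<bar> \<le> \<gamma> * k * init_norm * h" by simp
  moreover have "\<bar>z p s0 - z p 0\<bar> \<le> \<bar>\<gamma> - c5\<bar> * (c4 + k) * init_norm * h"
  proof -
    have "\<bar>z p s0 - z p 0\<bar> \<le> \<bar>\<gamma> - c5\<bar> * (c4 + k) * init_norm * s0"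
      using foot(4) z_boundary_increment[of s0] foot(1) c4_pos k_pos init_norm_nonneg
      by (auto simp: p_def)
    also have "\<dots> \<le> \<bar>\<gamma> - c5\<bar> * (c4 + k) * init_norm * h"
      using foot(1) c4_pos k_pos init_norm_nonneg by (intro mult_left_mono) auto
    finally show ?thesis .
  qed
  moreover have "\<bar>z p 0 - z y 0\<bar> \<le> (1 + \<gamma>) * vb * init_norm * h"
  proof -
    have "\<bar>z p 0 - z y 0\<bar> \<le> (1 + \<gamma>) * init_norm * \<bar>p - y\<bar>"
      using z_initial_Lipschitz[OF foot(3)[of s0] y] foot(1) by (simp add: p_def)
    also have "\<dots> \<le> (1 + \<gamma>) * init_norm * (vb * h)"
      using foot(1) vb_pos \<gamma>_nonneg init_norm_nonneg
      by (intro mult_left_mono) (auto simp: p_def abs_if algebra_simps)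
    finally show ?thesis by (simp add: algebra_simps)
  qed
  ultimately show "\<bar>z y h - z y 0\<bar> \<le> (\<gamma> * k + \<bar>\<gamma> - c5\<bar> * (c4 + k) + (1 + \<gamma>) * vb) * init_norm * h"
    by (simp add: algebra_simps)
qed

lemma z_difference_quotient_bound:
  "\<exists>C. \<forall>x\<in>{0..D}. \<forall>t\<ge>0. \<forall>h>0. \<bar>(z x (h + t) - z x t) / h\<bar> \<le> C * init_norm * exp (- k * t)"
proof -
  \<comment> \<open>The solution is only C^1, so z_t itself cannot be transported; its time difference
     quotients can, with bounds uniform in h.\<close>
  obtain C0 where C0: "\<And>y h. y \<in> {0..D} \<Longrightarrow> h \<ge> 0 \<Longrightarrow> \<bar>z y h - z y 0\<bar> \<le> C0 * init_norm * h"
    using z_initial_increment by blast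
  let ?Vt = "(c4 + k) * init_norm"
  have "\<bar>(z x (h + t) - z x t) / h\<bar> \<le>
      (C0 * init_norm + \<bar>\<gamma> - c5\<bar> * ?Vt + \<gamma> * k * ?Vt * D / vb) * exp (k * D / vb) * exp (- k * t)"
    if "x \<in> {0..D}" "t \<ge> 0" "h > 0" for x t h
  proof (rule transport_exp_bound[where g = "\<lambda>y \<sigma>. - \<gamma> * k * (v y (h + \<sigma>) - v y \<sigma>) / h",
        OF vb_pos k_pos _ _ _ _ that(1,2)])
    show "((\<lambda>s. (z (x - vb * t + vb * s) (h + s) - z (x - vb * t + vb * s) s) / h) has_real_derivative
            - \<gamma> * k * (v (x - vb * t + vb * \<sigma>) (h + \<sigma>) - v (x - vb * t + vb * \<sigma>) \<sigma>) / h)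
            (at \<sigma> within {max 0 (t - x / vb)..t})"
      if "x \<in> {0..D}" "t \<ge> 0" "\<sigma> \<in> {max 0 (t - x / vb)..t}" for x t \<sigma>
      using DERIV_cdivide[OF DERIV_diff[OF z_along_characteristic[OF that(1,2) less_imp_le[OF \<open>h > 0\<close>] that(3)]
            z_along_characteristic[OF that(1,2) order_refl that(3)]], of h]
      by (simp add: algebra_simps)
    have increment: "\<bar>v y (h + \<sigma>) - v y \<sigma>\<bar> / h \<le> ?Vt * exp (- k * \<sigma>)"
      if "y \<in> {0..D}" "\<sigma> \<ge> 0" for y \<sigma>
      using v_time_increment[OF that less_imp_le[OF \<open>h > 0\<close>]] \<open>h > 0\<close>
      by (simp add: divide_le_eq add.commute)
    show "\<bar>- \<gamma> * k * (v y (h + \<sigma>) - v y \<sigma>) / h\<bar> \<le> \<gamma> * k * ?Vt * exp (- k * \<sigma>)"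
      if "y \<in> {0..D}" "\<sigma> \<ge> 0" for y \<sigma>
      using mult_left_mono[OF increment[OF that], of "\<gamma> * k"] \<gamma>_nonneg k_pos \<open>h > 0\<close>
      by (simp add: abs_mult abs_divide mult.assoc)
    show "\<bar>(z 0 (h + \<sigma>) - z 0 \<sigma>) / h\<bar> \<le> \<bar>\<gamma> - c5\<bar> * ?Vt * exp (- k * \<sigma>)"
      if "\<sigma> \<ge> 0" for \<sigma>
      using mult_left_mono[OF increment[of 0 \<sigma>], of "\<bar>\<gamma> - c5\<bar>"] z_boundary[of \<sigma>] z_boundary[of "h + \<sigma>"]
        that \<open>h > 0\<close> D_pos
      by (simp add: abs_mult abs_divide mult.assoc right_diff_distrib[symmetric])
    show "\<bar>(z y (h + 0) - z y 0) / h\<bar> \<le> C0 * init_norm" if "y \<in> {0..D}" for y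
      using C0[OF that, of h] \<open>h > 0\<close> by (simp add: abs_divide divide_le_eq)
  qed
  then show ?thesis
    by (intro exI[of _ "(C0 + \<bar>\<gamma> - c5\<bar> * (c4 + k) + \<gamma> * k * (c4 + k) * D / vb) * exp (k * D / vb)"])
      (simp add: algebra_simps)
qed

lemma zt_bound: "\<exists>C. \<forall>x\<in>{0..D}. \<forall>t\<ge>0. \<bar>\<rho>t x t + \<gamma> * vt x t\<bar> \<le> C * init_norm * exp (- k * t)"
proof -
  obtain C where C: "\<And>x t h. x \<in> {0..D} \<Longrightarrow> t \<ge> 0 \<Longrightarrow> h > 0 \<Longrightarrow>
      \<bar>(z x (h + t) - z x t) / h\<bar> \<le> C * init_norm * exp (- k * t)"
    using z_difference_quotient_bound by blast
  have "\<bar>\<rho>t x t + \<gamma> * vt x t\<bar> \<le> C * init_norm * exp (- k * t)" if "x \<in> {0..D}" "t \<ge> 0" for x t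
  proof (rule has_real_derivative_abs_le)
    show "((\<lambda>s. z x s) has_real_derivative \<rho>t x t + \<gamma> * vt x t) (at t within {t..})"
      unfolding z_def using that by (intro DERIV_subset[OF DERIV_add[OF drt DERIV_cmult[OF dvt]]]) auto
    show "at t within {t..} \<noteq> bot" by (simp add: at_within_Ici_at_right)
    show "\<bar>z x s - z x t\<bar> \<le> C * init_norm * exp (- k * t) * \<bar>s - t\<bar>" if "s \<in> {t..}" for s
    proof (cases "s = t")
      case False
      then have "s - t > 0" using that by auto
      then show ?thesis
        using C[OF \<open>x \<in> {0..D}\<close> \<open>t \<ge> 0\<close> \<open>s - t > 0\<close>] by (simp add: abs_divide divide_le_eq)
    qed simp
  qed
  then show ?thesis by blast
qed

lemma \<rho>_bound: "\<exists>C. \<forall>x\<in>{0..D}. \<forall>t\<ge>0. \<bar>\<rho> x t\<bar> \<le> C * init_norm * exp (- k * t)"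
proof -
  obtain C where C: "\<And>x t. x \<in> {0..D} \<Longrightarrow> t \<ge> 0 \<Longrightarrow> \<bar>z x t\<bar> \<le> C * init_norm * exp (- k * t)"
    using z_bound by blast
  have "\<bar>\<rho> x t\<bar> \<le> (C + \<gamma>) * init_norm * exp (- k * t)" if "x \<in> {0..D}" "t \<ge> 0" for x t
  proof -
    have "\<bar>\<rho> x t\<bar> \<le> \<bar>z x t\<bar> + \<gamma> * \<bar>v x t\<bar>"
      using abs_triangle_ineq4[of "z x t" "\<gamma> * v x t"] \<gamma>_nonneg by (simp add: z_def abs_mult)
    also have "\<dots> \<le> C * init_norm * exp (- k * t) + \<gamma> * (init_norm * exp (- k * t))"
      using C[OF that] v_bound[OF that] \<gamma>_nonneg by (intro add_mono mult_left_mono) auto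
    finally show ?thesis by (simp add: algebra_simps)
  qed
  then show ?thesis by blast
qed

lemma \<rho>x_bound: "\<exists>C. \<forall>x\<in>{0..D}. \<forall>t\<ge>0. \<bar>\<rho>x x t\<bar> \<le> C * init_norm * exp (- k * t)"
proof -
  obtain C where C: "\<And>x t. x \<in> {0..D} \<Longrightarrow> t \<ge> 0 \<Longrightarrow>
      \<bar>\<rho>t x t + \<gamma> * vt x t\<bar> \<le> C * init_norm * exp (- k * t)"
    using zt_bound by blast
  have "\<bar>\<rho>x x t\<bar> \<le> ((C + \<gamma> * (c4 + k) + rb) / vb) * init_norm * exp (- k * t)"
    if "x \<in> {0..D}" "t \<ge> 0" for x t
  proof -
    have "\<bar>\<rho>t x t\<bar> \<le> \<bar>\<rho>t x t + \<gamma> * vt x t\<bar> + \<gamma> * \<bar>vt x t\<bar>"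
      using abs_triangle_ineq4[of "\<rho>t x t + \<gamma> * vt x t" "\<gamma> * vt x t"] \<gamma>_nonneg by (simp add: abs_mult)
    then have "\<bar>\<rho>t x t\<bar> + rb * \<bar>vx x t\<bar> \<le>
        C * init_norm * exp (- k * t) + \<gamma> * ((c4 + k) * init_norm * exp (- k * t))
          + rb * (init_norm * exp (- k * t))"
      using C[OF that] vt_bound[OF that] vx_bound[OF that] \<gamma>_nonneg rb_nonneg
      by (smt (verit) mult_left_mono)
    moreover have "\<bar>\<rho>x x t\<bar> * vb \<le> \<bar>\<rho>t x t\<bar> + rb * \<bar>vx x t\<bar>"
      using \<rho>_eq[OF that] vb_pos rb_nonneg abs_triangle_ineq[of "\<rho>t x t" "rb * vx x t"]
      by (simp add: abs_mult eq_neg_iff_add_eq_0[symmetric] algebra_simps)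
    ultimately show ?thesis using vb_pos by (simp add: field_simps)
  qed
  then show ?thesis by blast
qed

lemma c1norm_exp_decay:
  "\<exists>M>0. \<forall>t\<ge>0. c1norm D (\<lambda>x. \<rho> x t) (\<lambda>x. \<rho>x x t) + c1norm D (\<lambda>x. v x t) (\<lambda>x. vx x t)
     \<le> M * init_norm * exp (- k * t)"
proof -
  obtain C1 C2 where
    C1: "\<And>x t. x \<in> {0..D} \<Longrightarrow> t \<ge> 0 \<Longrightarrow> \<bar>\<rho> x t\<bar> \<le> C1 * init_norm * exp (- k * t)" and
    C2: "\<And>x t. x \<in> {0..D} \<Longrightarrow> t \<ge> 0 \<Longrightarrow> \<bar>\<rho>x x t\<bar> \<le> C2 * init_norm * exp (- k * t)"
    using \<rho>_bound \<rho>x_bound by blast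
  show ?thesis
  proof (intro exI[of _ "\<bar>C1\<bar> + \<bar>C2\<bar> + 2"] conjI allI impI)
    fix t :: real assume "t \<ge> 0"
    have "c1norm D (\<lambda>x. \<rho> x t) (\<lambda>x. \<rho>x x t) + c1norm D (\<lambda>x. v x t) (\<lambda>x. vx x t)
       \<le> (C1 * init_norm * exp (- k * t) + C2 * init_norm * exp (- k * t))
         + (init_norm * exp (- k * t) + init_norm * exp (- k * t))"
      using D_pos C1 C2 v_bound vx_bound \<open>t \<ge> 0\<close> by (intro add_mono c1norm_le) auto
    also have "\<dots> = (C1 + C2 + 2) * init_norm * exp (- k * t)" by (simp add: algebra_simps)
    also have "\<dots> \<le> (\<bar>C1\<bar> + \<bar>C2\<bar> + 2) * init_norm * exp (- k * t)"
      using init_norm_nonneg by (intro mult_right_mono) auto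
    finally show "c1norm D (\<lambda>x. \<rho> x t) (\<lambda>x. \<rho>x x t) + c1norm D (\<lambda>x. v x t) (\<lambda>x. vx x t)
       \<le> (\<bar>C1\<bar> + \<bar>C2\<bar> + 2) * init_norm * exp (- k * t)" .
  qed simp
qed

end

lemma h_mix_pos:
  assumes "0 < \<alpha>" "\<alpha> \<le> 1" "ta > 0" "tm > 0" "hm > 0" "ha > 0"
  shows "h_mix \<alpha> ta tm hm ha > 0"
proof -
  have "0 \<le> (1 - \<alpha>) * (ta / tm)" "0 \<le> (1 - \<alpha>) * (ta / tm) * (ha / hm)"
    using assms by auto
  then show ?thesis using assms unfolding h_mix_def by (simp add: add_pos_nonneg)
qed

lemma equilibrium_constants_pos:
  assumes "L > 0" "0 < \<alpha>" "\<alpha> \<le> 1" "ta > 0" "tm > 0" "hm > 0" "ha > 0"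
    and "q > 0" "q * h_mix \<alpha> ta tm hm ha < 1"
  shows "v_bar L \<alpha> ta tm hm ha q > 0" and "rho_bar L \<alpha> ta tm hm ha q > 0"
    and "cc3 L \<alpha> ta tm hm ha q > 0" and "cc4 L \<alpha> ta tm hm ha > 0"
proof -
  let ?h = "h_mix \<alpha> ta tm hm ha" and ?v = "v_bar L \<alpha> ta tm hm ha q"
  have "?h > 0" using h_mix_pos assms by blast
  have "1 / q - ?h > 0" using assms by (simp add: field_simps)
  then show v: "?v > 0" using assms by (simp add: v_bar_def)
  then show "rho_bar L \<alpha> ta tm hm ha q > 0" using assms by (simp add: rho_bar_def)
  have "1 / rho_bar L \<alpha> ta tm hm ha q - L = ?v * ?h"
    using \<open>1 / q - ?h > 0\<close> by (simp add: rho_bar_def v_bar_def field_simps)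
  then show "cc3 L \<alpha> ta tm hm ha q > 0" using v \<open>?h > 0\<close> assms by (simp add: cc3_def)
  show "cc4 L \<alpha> ta tm hm ha > 0" using \<open>?h > 0\<close> assms by (simp add: cc4_def)
qed

theorem theorem1:
  fixes L D \<alpha> ta tm hm ha k q :: real
    and \<rho> v \<rho>x \<rho>t vx vt h :: "real \<Rightarrow> real \<Rightarrow> real"
  defines "vb \<equiv> v_bar L \<alpha> ta tm hm ha q"
    and "rb \<equiv> rho_bar L \<alpha> ta tm hm ha q"
    and "c1 \<equiv> cc1 L \<alpha> ta tm hm ha q"
    and "c2 \<equiv> cc2 \<alpha> ta tm"
    and "c3 \<equiv> cc3 L \<alpha> ta tm hm ha q"
    and "c4 \<equiv> cc4 L \<alpha> ta tm hm ha"
    and "c5 \<equiv> cc5 L \<alpha> ta tm hm ha q"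
  assumes "L > 0" and "D > 0" and "0 < \<alpha>" and "\<alpha> \<le> 1"
    and "ta > 0" and "tm > 0" and "hm > 0" and "ha > 0" and "k > 0"
    and "q > 0" and "q * h_mix \<alpha> ta tm hm ha < 1"
    \<comment> \<open>classical C^1 solution on [0,D] x [0,oo): partial derivatives exist and are continuous\<close>
    and drx: "\<And>x t. x \<in> {0..D} \<Longrightarrow> t \<ge> 0 \<Longrightarrow>
               ((\<lambda>y. \<rho> y t) has_real_derivative \<rho>x x t) (at x within {0..D})"
    and drt: "\<And>x t. x \<in> {0..D} \<Longrightarrow> t \<ge> 0 \<Longrightarrow>
               ((\<lambda>s. \<rho> x s) has_real_derivative \<rho>t x t) (at t within {0..})"
    and dvx: "\<And>x t. x \<in> {0..D} \<Longrightarrow> t \<ge> 0 \<Longrightarrow>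
               ((\<lambda>y. v y t) has_real_derivative vx x t) (at x within {0..D})"
    and dvt: "\<And>x t. x \<in> {0..D} \<Longrightarrow> t \<ge> 0 \<Longrightarrow>
               ((\<lambda>s. v x s) has_real_derivative vt x t) (at t within {0..})"
    and cont: "continuous_on ({0..D} \<times> {0..}) (\<lambda>(x,t). \<rho>x x t)"
              "continuous_on ({0..D} \<times> {0..}) (\<lambda>(x,t). \<rho>t x t)"
              "continuous_on ({0..D} \<times> {0..}) (\<lambda>(x,t). vx x t)"
              "continuous_on ({0..D} \<times> {0..}) (\<lambda>(x,t). vt x t)"
    \<comment> \<open>control law\<close>
    and ctrl: "\<And>x t. h x t = (1 / c3) * (- c1 * \<rho> x t + (k - c2) * v x t)"
    \<comment> \<open>PDEs\<close>
    and pde1: "\<And>x t. x \<in> {0..D} \<Longrightarrow> t \<ge> 0 \<Longrightarrow>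
               \<rho>t x t + vb * \<rho>x x t + rb * vx x t = 0"
    and pde2: "\<And>x t. x \<in> {0..D} \<Longrightarrow> t \<ge> 0 \<Longrightarrow>
               vt x t - c4 * vx x t = - c1 * \<rho> x t - c2 * v x t - c3 * h x t"
    \<comment> \<open>boundary conditions\<close>
    and bc0: "\<And>t. t \<ge> 0 \<Longrightarrow> \<rho> 0 t + c5 * v 0 t = 0"
    and bcD: "\<And>t. t \<ge> 0 \<Longrightarrow> vt D t = - c1 * \<rho> D t - c2 * v D t - c3 * h D t"
    \<comment> \<open>first-order compatibility of the initial data\<close>
    and comp0: "\<rho> 0 0 + c5 * v 0 0 = 0"
    and comp1: "- vb * \<rho>x 0 0 - rb * vx 0 0 + c5 * (c4 * vx 0 0 - k * v 0 0) = 0"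
    and comp2: "vx D 0 = 0"
  shows "\<exists>\<mu> > 0. \<forall>t \<ge> 0.
           c1norm D (\<lambda>x. \<rho> x t) (\<lambda>x. \<rho>x x t) + c1norm D (\<lambda>x. v x t) (\<lambda>x. vx x t)
           \<le> \<mu> * (c1norm D (\<lambda>x. \<rho> x 0) (\<lambda>x. \<rho>x x 0) + c1norm D (\<lambda>x. v x 0) (\<lambda>x. vx x 0))
               * exp (- (k / 2) * t)"
proof -
  have pos: "vb > 0" "rb > 0" "c3 > 0" "c4 > 0"
    using equilibrium_constants_pos[OF \<open>L > 0\<close> \<open>0 < \<alpha>\<close> \<open>\<alpha> \<le> 1\<close> \<open>ta > 0\<close> \<open>tm > 0\<close> \<open>hm > 0\<close>
        \<open>ha > 0\<close> \<open>q > 0\<close> \<open>q * h_mix \<alpha> ta tm hm ha < 1\<close>]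
    unfolding vb_def rb_def c3_def c4_def by auto
  have c3h: "c3 * h x t = - c1 * \<rho> x t + (k - c2) * v x t" for x t
    using ctrl[of x t] pos(3) by simp
  have v_eq: "vt x t = c4 * vx x t - k * v x t" if "x \<in> {0..D}" "t \<ge> 0" for x t
    using pde2[OF that] c3h[of x t] by (simp add: algebra_simps)
  have v_bc: "vt D t = - k * v D t" if "t \<ge> 0" for t
    using bcD[OF that] c3h[of D t] by (simp add: algebra_simps)
  interpret closed_loop D vb rb c4 c5 k \<rho> v \<rho>x \<rho>t vx vt
    using \<open>D > 0\<close> \<open>k > 0\<close> pos drx drt dvx dvt cont pde1 v_eq v_bc bc0 by unfold_locales auto
  obtain M where "M > 0" and M: "\<And>t. t \<ge> 0 \<Longrightarrow>
      c1norm D (\<lambda>x. \<rho> x t) (\<lambda>x. \<rho>x x t) + c1norm D (\<lambda>x. v x t) (\<lambda>x. vx x t)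
        \<le> M * init_norm * exp (- k * t)"
    using c1norm_exp_decay by blast
  have slower: "M * init_norm * exp (- k * t) \<le> M * init_norm * exp (- (k / 2) * t)" if "t \<ge> 0" for t
    using that \<open>k > 0\<close> \<open>M > 0\<close> init_norm_nonneg by (intro mult_left_mono) auto
  show ?thesis
    using M slower \<open>M > 0\<close> unfolding init_norm_def by (blast intro: order_trans)
qed

end
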